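(* Let $\mathcal{L}$ be the set of formulas of classical propositional calculus and let $\mathcal{C}: 2^{\mathcal{L}}\to 2^{\mathcal{L}}$ satisfy Weak Compactness, Inclusion, Cumulativity, $\wedge$-R, $\neg$-R1 and $\neg$-R2. Define a binary relation $\mid\!\sim$ on $\mathcal{L}$ by $a \mid\!\sim b$ iff $b \in \mathcal{C}(\{a\})$. Then $\mid\!\sim$ is a cumulative relation.
   Context: Write $\mathcal{C}(A, a_1,\dots,a_k)$ for $\mathcal{C}(A\cup\{a_1,\dots,a_k\})$. Properties, for all $A,B\subseteq\mathcal{L}$, $a,b\in\mathcal{L}$: Inclusion: $A\subseteq\mathcal{C}(A)$. Cumulativity: $A\subseteq B\subseteq\mathcal{C}(A)\Rightarrow \mathcal{C}(A)=\mathcal{C}(B)$. Weak Compactness: if $\mathcal{C}(A)=\mathcal{L}$ then $\mathcal{C}(B)=\mathcal{L}$ for some finite $B\subseteq A$. $\wedge$-R: $\mathcal{C}(A,a\wedge b)=\mathcal{C}(A,a,b)$. $\neg$-R1: $\mathcal{C}(A,a,\neg a)=\mathcal{L}$. $\neg$-R2: if $\mathcal{C}(A,\neg a)=\mathcal{L}$ then $a\in\mathcal{C}(A)$. A cumulative relation (Kraus–Lehmann–Magidor) is a binary relation $\mid\!\sim$ on propositional formulas satisfying, for all formulas $a,a',b,b',c$ ($\models$ denoting classical validity/entailment): Reflexivity $a\mid\!\sim a$; Left Logical Equivalence: if $\models a\leftrightarrow a'$ and $a\mid\!\sim c$ then $a'\mid\!\sim c$; Right Weakening: if $b\models b'$ and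 $a\mid\!\sim b$ then $a\mid\!\sim b'$; Cut: if $a\wedge b\mid\!\sim c$ and $a\mid\!\sim b$ then $a\mid\!\sim c$; Cautious Monotonicity: if $a\mid\!\sim b$ and $a\mid\!\sim c$ then $a\wedge b\mid\!\sim c$. *)

theory Defs
  imports Main
begin

text \<open>Formulas of classical propositional calculus over atoms of type 'a,
  with primitive connectives negation and conjunction (the connectives the
  rules talk about); the other connectives are the usual abbreviations.\<close>

datatype 'a form = Atom 'a | Neg "'a form" | Conj "'a form" "'a form"

definition Disj :: "'a form \<Rightarrow> 'a form \<Rightarrow> 'a form" where
  "Disj a b = Neg (Conj (Neg a) (Neg b))"

definition Imp :: "'a form \<Rightarrow> 'a form \<Rightarrow> 'a form" where
  "Imp a b = Neg (Conj a (Neg b))"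

definition Iff :: "'a form \<Rightarrow> 'a form \<Rightarrow> 'a form" where
  "Iff a b = Conj (Imp a b) (Imp b a)"

primrec eval :: "('a \<Rightarrow> bool) \<Rightarrow> 'a form \<Rightarrow> bool" where
  "eval v (Atom p) = v p"
| "eval v (Neg a) = (\<not> eval v a)"
| "eval v (Conj a b) = (eval v a \<and> eval v b)"

definition valid :: "'a form \<Rightarrow> bool" where
  "valid a \<longleftrightarrow> (\<forall>v. eval v a)"

definition entails :: "'a form \<Rightarrow> 'a form \<Rightarrow> bool" where
  "entails a b \<longleftrightarrow> (\<forall>v. eval v a \<longrightarrow> eval v b)"

definition cumulative_rel :: "('a form \<Rightarrow> 'a form \<Rightarrow> bool) \<Rightarrow> bool" where
  "cumulative_rel R \<longleftrightarrow>
     (\<forall>a. R a a) \<and>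
     (\<forall>a a' c. valid (Iff a a') \<and> R a c \<longrightarrow> R a' c) \<and>
     (\<forall>a b b'. entails b b' \<and> R a b \<longrightarrow> R a b') \<and>
     (\<forall>a b c. R (Conj a b) c \<and> R a b \<longrightarrow> R a c) \<and>
     (\<forall>a b c. R a b \<and> R a c \<longrightarrow> R (Conj a b) c)"

end

theory Submission
  imports Defs
begin

text \<open>The rules \<open>\<and>\<close>-R, \<open>\<not>\<close>-R1 and \<open>\<not>\<close>-R2, read backwards, are the rules of a
  propositional tableau calculus, so by induction on the size of a finite set of premises
  every classically unsatisfiable finite set is \<open>\<C>\<close>-inconsistent. With \<open>\<not>\<close>-R2 this makes
  \<open>\<C>\<close> supraclassical on finite premise sets, which yields Left Logical Equivalence and
  Right Weakening for \<open>a |\<sim> b \<longleftrightarrow> b \<in> \<C>({a})\<close>. Cut and Cautious Monotonicity both say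
  \<open>\<C>({a \<and> b}) = \<C>({a})\<close> whenever \<open>b \<in> \<C>({a})\<close>, which follows from \<open>\<and>\<close>-R and Cumulativity.
  Only finite premise sets occur.\<close>

definition satisfiable :: "'a form set \<Rightarrow> bool" where
  "satisfiable S \<longleftrightarrow> (\<exists>v. \<forall>x\<in>S. eval v x)"

definition literal :: "'a form \<Rightarrow> bool" where
  "literal x \<longleftrightarrow> (\<exists>p. x = Atom p \<or> x = Neg (Atom p))"

lemma satisfiable_literals:
  assumes "\<forall>x\<in>S. literal x" and "\<forall>p. Atom p \<in> S \<longrightarrow> Neg (Atom p) \<notin> S"
  shows "satisfiable S"
  unfolding satisfiable_def
proof (intro exI ballI)
  fix x assume "x \<in> S"
  then obtain p where "x = Atom p \<or> x = Neg (Atom p)" using assms(1) unfolding literal_def by blast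
  with \<open>x \<in> S\<close> assms(2) show "eval (\<lambda>p. Atom p \<in> S) x"
    by (metis eval.simps(1,2))
qed

lemma non_literal_cases:
  assumes "\<not> literal x"
  obtains (Conj) a b where "x = Conj a b"
    | (Neg_Neg) a where "x = Neg (Neg a)"
    | (Neg_Conj) a b where "x = Neg (Conj a b)"
  using assms unfolding literal_def by (metis form.exhaust)

lemma valid_Iff_iff_entails: "valid (Iff a b) \<longleftrightarrow> entails a b \<and> entails b a"
  by (auto simp: valid_def entails_def Iff_def Imp_def)

locale consequence_operator =
  fixes C :: "'a form set \<Rightarrow> 'a form set"
  assumes inclusion: "\<And>A. A \<subseteq> C A"
    and cumulativity: "\<And>A B. A \<subseteq> B \<Longrightarrow> B \<subseteq> C A \<Longrightarrow> C A = C B"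
    and conj_R: "\<And>A a b. C (A \<union> {Conj a b}) = C (A \<union> {a, b})"
    and neg_R1: "\<And>A a. C (A \<union> {a, Neg a}) = UNIV"
    and neg_R2: "\<And>A a. C (A \<union> {Neg a}) = UNIV \<Longrightarrow> a \<in> C A"
begin

lemma inconsistent_mono: "C A = UNIV \<Longrightarrow> A \<subseteq> B \<Longrightarrow> C B = UNIV"
  using cumulativity[of A B] by auto

lemma C_insert_eq: "a \<in> C A \<Longrightarrow> C (insert a A) = C A"
  using cumulativity[of A "insert a A"] inclusion[of A] by auto

lemma C_insert_eq_if_refutable: "C (insert (Neg a) A) = UNIV \<Longrightarrow> C (insert a A) = C A"
  using neg_R2[of A a] C_insert_eq by simp

lemma C_insert_Conj: "C (insert (Conj a b) A) = C (insert a (insert b A))"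
  using conj_R[of A a b] by simp

lemma inconsistent_complementary: "a \<in> A \<Longrightarrow> Neg a \<in> A \<Longrightarrow> C A = UNIV"
  using neg_R1[of A a] by (simp add: insert_absorb)

lemma inconsistent_Neg_Neg:
  assumes "C (insert a A) = UNIV"
  shows "C (insert (Neg (Neg a)) A) = UNIV"
proof -
  let ?A = "insert (Neg (Neg a)) A"
  have "C ?A = C (insert a ?A)"
    by (rule C_insert_eq_if_refutable[symmetric], rule inconsistent_complementary[of "Neg a"]) auto
  also have "\<dots> = UNIV"
    by (rule inconsistent_mono[OF assms]) auto
  finally show ?thesis .
qed

lemma inconsistent_Neg_Conj:
  assumes "C (insert (Neg a) A) = UNIV" and "C (insert (Neg b) A) = UNIV"
  shows "C (insert (Neg (Conj a b)) A) = UNIV"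
proof -
  let ?A = "insert (Neg (Conj a b)) A"
  have "C ?A = C (insert a ?A)"
    by (rule C_insert_eq_if_refutable[symmetric], rule inconsistent_mono[OF assms(1)]) auto
  also have "\<dots> = C (insert b (insert a ?A))"
    by (rule C_insert_eq_if_refutable[symmetric], rule inconsistent_mono[OF assms(2)]) auto
  also have "\<dots> = C (insert (Conj a b) ?A)"
    by (simp add: C_insert_Conj insert_commute)
  also have "\<dots> = UNIV"
    by (rule inconsistent_complementary[of "Conj a b"]) auto
  finally show ?thesis .
qed

lemma inconsistent_if_unsatisfiable_list:
  "\<not> satisfiable (set G) \<Longrightarrow> C (set G) = UNIV"
proof (induction "sum_list (map size G)" arbitrary: G rule: less_induct)
  case less
  show ?case
  proof (cases "\<forall>x\<in>set G. literal x")
    case True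
    then show ?thesis
      using less.prems satisfiable_literals inconsistent_complementary by blast
  next
    case False
    then obtain x where x: "x \<in> set G" "\<not> literal x" by blast
    define G' where "G' = remove1 x G"
    have set_G: "set G = insert x (set G')"
      unfolding G'_def using x(1) by (induction G) auto
    have size_G: "sum_list (map size G) = size x + sum_list (map size G')"
      unfolding G'_def using x(1) by (rule sum_list_map_remove1)
    have IH: "C (set (H @ G')) = UNIV"
      if "sum_list (map size H) < size x" "\<not> satisfiable (set H \<union> set G')" for H
      using less.hyps[of "H @ G'"] that size_G by auto
    have unsat: "\<not> satisfiable (insert x (set G'))"
      using less.prems set_G by simp
    from x(2) show ?thesis
    proof (cases rule: non_literal_cases)
      case (Conj a b)
      then show ?thesis
        using IH[of "[a, b]"] unsat by (auto simp: set_G C_insert_Conj satisfiable_def)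
    next
      case (Neg_Neg a)
      have "C (insert a (set G')) = UNIV"
        using IH[of "[a]"] unsat Neg_Neg by (auto simp: satisfiable_def)
      then show ?thesis unfolding set_G Neg_Neg by (rule inconsistent_Neg_Neg)
    next
      case (Neg_Conj a b)
      have "C (insert (Neg a) (set G')) = UNIV" "C (insert (Neg b) (set G')) = UNIV"
        using IH[of "[Neg a]"] IH[of "[Neg b]"] unsat Neg_Conj by (auto simp: satisfiable_def)
      then show ?thesis unfolding set_G Neg_Conj by (rule inconsistent_Neg_Conj)
    qed
  qed
qed

lemma inconsistent_if_unsatisfiable:
  "finite S \<Longrightarrow> \<not> satisfiable S \<Longrightarrow> C S = UNIV"
  using inconsistent_if_unsatisfiable_list finite_list by blast

lemma mem_C_if_entailed:
  assumes "finite A" and "\<forall>v. (\<forall>x\<in>A. eval v x) \<longrightarrow> eval v b"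
  shows "b \<in> C A"
proof (rule neg_R2)
  show "C (A \<union> {Neg b}) = UNIV"
    using assms by (intro inconsistent_if_unsatisfiable) (auto simp: satisfiable_def)
qed

lemma C_insert_entailed: "entails a b \<Longrightarrow> C (insert b {a}) = C {a}"
  using mem_C_if_entailed[of "{a}" b] by (simp add: entails_def C_insert_eq)

lemma C_singleton_Conj: "b \<in> C {a} \<Longrightarrow> C {Conj a b} = C {a}"
  using C_insert_Conj[of a b "{}"] C_insert_eq[of b "{a}"] by (simp add: insert_commute)

lemma cumulative_rel_C_singleton: "cumulative_rel (\<lambda>a b. b \<in> C {a})"
proof -
  have reflexivity: "a \<in> C {a}" for a
    using inclusion by blast
  have left_logical_equivalence: "c \<in> C {a'}" if "valid (Iff a a')" "c \<in> C {a}" for a a' c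
  proof -
    have "C {a} = C {a, a'}" "C {a'} = C {a', a}"
      using that(1) C_insert_entailed[of a a'] C_insert_entailed[of a' a]
      by (simp_all add: valid_Iff_iff_entails insert_commute)
    with that(2) show ?thesis by (simp add: insert_commute)
  qed
  have right_weakening: "b' \<in> C {a}" if "entails b b'" "b \<in> C {a}" for a b b'
  proof -
    have "b' \<in> C {a, b}"
      using that(1) by (intro mem_C_if_entailed) (auto simp: entails_def)
    moreover have "C {a, b} = C {a}"
      using C_insert_eq[OF that(2)] by (simp add: insert_commute)
    ultimately show ?thesis by simp
  qed
  have cut: "c \<in> C {a}" if "c \<in> C {Conj a b}" "b \<in> C {a}" for a b c
    using that C_singleton_Conj by simp
  have cautious_monotonicity: "c \<in> C {Conj a b}" if "b \<in> C {a}" "c \<in> C {a}" for a b c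
    using that C_singleton_Conj by simp
  show ?thesis
    unfolding cumulative_rel_def
    using reflexivity left_logical_equivalence right_weakening cut cautious_monotonicity
    by blast
qed

end

theorem theorem7:
  fixes C :: "'a form set \<Rightarrow> 'a form set"
  assumes weak_compactness:
      "\<And>A. C A = UNIV \<Longrightarrow> \<exists>B. finite B \<and> B \<subseteq> A \<and> C B = UNIV"
    and inclusion: "\<And>A. A \<subseteq> C A"
    and cumulativity: "\<And>A B. A \<subseteq> B \<Longrightarrow> B \<subseteq> C A \<Longrightarrow> C A = C B"
    and conj_R: "\<And>A a b. C (A \<union> {Conj a b}) = C (A \<union> {a, b})"
    and neg_R1: "\<And>A a. C (A \<union> {a, Neg a}) = UNIV"
    and neg_R2: "\<And>A a. C (A \<union> {Neg a}) = UNIV \<Longrightarrow> a \<in> C A"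
  shows "cumulative_rel (\<lambda>a b. b \<in> C {a})"
proof -
  interpret consequence_operator C
    using inclusion cumulativity conj_R neg_R1 neg_R2 by unfold_locales
  show ?thesis by (rule cumulative_rel_C_singleton)
qed

end
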